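(* Let $A$ be a finite alphabet. If $u_1$ is $\ell_1$-rich and $u_2$ is $\ell_2$-rich, then for all $v,v'\in A^*$, $v\sim_n v'$ implies $u_1vu_2\sim_{\ell_1+n+\ell_2}u_1v'u_2$.
   Context: A word $u\in A^*$ is rich if every letter of $A$ occurs in it. For $\ell\in\mathbb{N}$, $u$ is $\ell$-rich if it can be written $u=u_1\cdots u_\ell u'$ where $u_1,\ldots,u_\ell$ are rich. $u\sim_n v$ iff $u$ and $v$ have exactly the same (scattered) subwords of length at most $n$. *)

theory Defs
  imports Main "HOL-Library.Sublist"
begin

(* The alphabet A is the (finite) type 'a, i.e. A = UNIV. Words are lists. *)

definition rich :: "'a list \<Rightarrow> bool" where
  "rich u \<longleftrightarrow> (\<forall>a::'a. a \<in> set u)"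

definition lrich :: "nat \<Rightarrow> 'a list \<Rightarrow> bool" where
  "lrich l u \<longleftrightarrow> (\<exists>us u'. length us = l \<and> (\<forall>x\<in>set us. rich x) \<and> u = concat us @ u')"

definition simon_eq :: "nat \<Rightarrow> 'a list \<Rightarrow> 'a list \<Rightarrow> bool" where
  "simon_eq n u v \<longleftrightarrow> (\<forall>w. length w \<le> n \<longrightarrow> (subseq w u \<longleftrightarrow> subseq w v))"

end

theory Submission
  imports Defs
begin

text \<open>An \<open>\<ell>\<close>-rich word contains every word of length at most \<open>\<ell>\<close> as a subword, one letter
  taken from each rich factor. Hence a subword \<open>w\<close> of \<open>u\<^sub>1 v\<close> with \<open>|w| \<le> \<ell>\<^sub>1 + n\<close> splits
  as \<open>w\<^sub>1 w\<^sub>2\<close> where either \<open>w\<^sub>2\<close> is a subword of \<open>v\<close> of length at most \<open>n\<close>, or the first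
  \<open>\<ell>\<^sub>1\<close> letters of \<open>w\<close> embed into \<open>u\<^sub>1\<close> and the rest, of length at most \<open>n\<close>, into \<open>v\<close>;
  in both cases \<open>v \<sim>\<^sub>n v'\<close> transfers the embedding to \<open>u\<^sub>1 v'\<close>. Multiplying on the right
  is the mirror image under reversal.\<close>

definition universal :: "nat \<Rightarrow> 'a list \<Rightarrow> bool" where
  "universal l u \<longleftrightarrow> (\<forall>w. length w \<le> l \<longrightarrow> subseq w u)"

lemma subseq_rev_iff [simp]: "subseq (rev xs) (rev ys) \<longleftrightarrow> subseq xs ys"
proof -
  have rev_mono: "subseq (rev xs) (rev ys)" if "subseq xs ys" for xs ys :: "'b list"
    using that
  proof induction
    case (list_emb_Cons xs ys y)
    then show ?case by (simp add: subseq_rev_drop_many)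
  next
    case (list_emb_Cons2 x y xs ys)
    then show ?case by (simp add: list_emb_append_mono)
  qed simp
  show ?thesis using rev_mono[of xs ys] rev_mono[of "rev xs" "rev ys"] by auto
qed

lemma universal_concat_rich:
  assumes "\<forall>x\<in>set us. rich x"
  shows "universal (length us) (concat us)"
  unfolding universal_def
proof (intro allI impI)
  fix w :: "'a list"
  assume "length w \<le> length us"
  with assms show "subseq w (concat us)"
  proof (induction us arbitrary: w)
    case (Cons r rs)
    show ?case
    proof (cases w)
      case (Cons a w')
      have "subseq [a] r" using Cons.prems by (simp add: rich_def subseq_singleton_left)
      moreover have "subseq w' (concat rs)" using Cons.IH Cons.prems \<open>w = a # w'\<close> by simp
      ultimately show ?thesis using \<open>w = a # w'\<close> by (simp add: list_emb_append_mono[of _ "[a]", simplified])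
    qed simp
  qed simp
qed

lemma lrich_imp_universal: "lrich l u \<Longrightarrow> universal l u"
  unfolding lrich_def
  by (metis universal_concat_rich universal_def subseq_rev_drop_many)

lemma universal_rev: "universal l (rev u) \<longleftrightarrow> universal l u"
  unfolding universal_def by (metis length_rev rev_rev_ident subseq_rev_iff)

lemma simon_eq_sym: "simon_eq n x y \<Longrightarrow> simon_eq n y x"
  unfolding simon_eq_def by blast

lemma simon_eq_rev: "simon_eq n (rev x) (rev y) \<longleftrightarrow> simon_eq n x y"
  unfolding simon_eq_def by (metis length_rev rev_rev_ident subseq_rev_iff)

lemma subseq_universal_append_transfer:
  assumes "universal l p" "simon_eq k x y" "length w \<le> l + k" "subseq w (p @ x)"
  shows "subseq w (p @ y)"
proof -
  obtain w1 w2 where w: "w = w1 @ w2" "subseq w1 p" "subseq w2 x"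
    using assms(4) by (auto elim: subseq_appendE)
  show ?thesis
  proof (cases "l \<le> length w1")
    case True
    then have "subseq w2 y" using assms(2,3) w unfolding simon_eq_def by simp
    with w show ?thesis by (simp add: list_emb_append_mono)
  next
    case False
    have "subseq (take l w) p" using assms(1) unfolding universal_def by simp
    moreover have "suffix (drop l w) w2" using False w(1) by (simp add: suffix_drop)
    then have "subseq (drop l w) x" using w(3) by (meson suffix_imp_subseq subseq_order.order_trans)
    then have "subseq (drop l w) y" using assms(2,3) unfolding simon_eq_def by simp
    ultimately have "subseq (take l w @ drop l w) (p @ y)" by (rule list_emb_append_mono)
    then show ?thesis by simp
  qed
qed

lemma simon_eq_universal_append_left:
  assumes "universal l p" "simon_eq k x y"
  shows "simon_eq (l + k) (p @ x) (p @ y)"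
  unfolding simon_eq_def
  using subseq_universal_append_transfer[OF assms]
    subseq_universal_append_transfer[OF assms(1) simon_eq_sym[OF assms(2)]]
  by blast

lemma simon_eq_universal_append_right:
  assumes "universal l s" "simon_eq k x y"
  shows "simon_eq (k + l) (x @ s) (y @ s)"
proof -
  have "simon_eq (l + k) (rev s @ rev x) (rev s @ rev y)"
    using assms by (simp add: simon_eq_universal_append_left universal_rev simon_eq_rev)
  then show ?thesis by (metis simon_eq_rev rev_append add.commute)
qed

theorem lemma4:
  fixes u1 u2 v v' :: "'a::finite list"
  assumes "lrich l1 u1" and "lrich l2 u2" and "simon_eq n v v'"
  shows "simon_eq (l1 + n + l2) (u1 @ v @ u2) (u1 @ v' @ u2)"
proof -
  have "simon_eq (n + l2) (v @ u2) (v' @ u2)"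
    using assms(2,3) by (simp add: lrich_imp_universal simon_eq_universal_append_right)
  with assms(1) show ?thesis
    by (simp add: lrich_imp_universal simon_eq_universal_append_left add.assoc)
qed

end
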